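(* Let $p\ne q$ be primes and $G=\mathbb{Z}_p^2\times\mathbb{Z}_q^2$. If $A\subseteq G$ and $B$ is a subgroup of $G$ such that $A\oplus B=G$ (i.e. $A+B=G$ and $|A||B|=|G|$), then $A$ is spectral.
   Context: For $w=(u,v)\in G$ ($u\in\mathbb{Z}_p^2$, $v\in\mathbb{Z}_q^2$) define $\chi_w(a,b)=\exp\big(2\pi i(\tfrac{u\cdot a}{p}+\tfrac{v\cdot b}{q})\big)$ and $\chi(A)=\sum_{s\in A}\chi(s)$. $A$ is spectral if there is $\Lambda\subseteq G$ with $|\Lambda|=|A|$ and $\chi_{\lambda-\lambda'}(A)=0$ for all distinct $\lambda,\lambda'\in\Lambda$. *)

theory Defs
  imports "HOL-Analysis.Analysis"
begin

text \<open>The group G = Z_p^2 x Z_q^2, elements represented as quadruples (a1,a2,b1,b2)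
  of natural numbers with a_i < p and b_i < q; addition componentwise mod p resp. mod q.\<close>

type_synonym elt = "nat \<times> nat \<times> nat \<times> nat"

definition grp :: "nat \<Rightarrow> nat \<Rightarrow> elt set" where
  "grp p q = {(a1, a2, b1, b2). a1 < p \<and> a2 < p \<and> b1 < q \<and> b2 < q}"

definition gadd :: "nat \<Rightarrow> nat \<Rightarrow> elt \<Rightarrow> elt \<Rightarrow> elt" where
  "gadd p q x y = (case x of (a1, a2, b1, b2) \<Rightarrow> case y of (c1, c2, d1, d2) \<Rightarrow>
     ((a1 + c1) mod p, (a2 + c2) mod p, (b1 + d1) mod q, (b2 + d2) mod q))"

definition gneg :: "nat \<Rightarrow> nat \<Rightarrow> elt \<Rightarrow> elt" where
  "gneg p q x = (case x of (a1, a2, b1, b2) \<Rightarrow>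
     ((p - a1) mod p, (p - a2) mod p, (q - b1) mod q, (q - b2) mod q))"

definition gsub :: "nat \<Rightarrow> nat \<Rightarrow> elt \<Rightarrow> elt \<Rightarrow> elt" where
  "gsub p q x y = gadd p q x (gneg p q y)"

definition sumset :: "nat \<Rightarrow> nat \<Rightarrow> elt set \<Rightarrow> elt set \<Rightarrow> elt set" where
  "sumset p q A B = {gadd p q a b | a b. a \<in> A \<and> b \<in> B}"

definition is_subgroup :: "nat \<Rightarrow> nat \<Rightarrow> elt set \<Rightarrow> bool" where
  "is_subgroup p q B \<longleftrightarrow> B \<subseteq> grp p q \<and> (0, 0, 0, 0) \<in> B \<and>
     (\<forall>x\<in>B. \<forall>y\<in>B. gadd p q x y \<in> B) \<and> (\<forall>x\<in>B. gneg p q x \<in> B)"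

definition chi :: "nat \<Rightarrow> nat \<Rightarrow> elt \<Rightarrow> elt \<Rightarrow> complex" where
  "chi p q w s = (case w of (u1, u2, v1, v2) \<Rightarrow> case s of (a1, a2, b1, b2) \<Rightarrow>
     cis (2 * pi * (real (u1 * a1 + u2 * a2) / real p + real (v1 * b1 + v2 * b2) / real q)))"

definition chi_set :: "nat \<Rightarrow> nat \<Rightarrow> elt \<Rightarrow> elt set \<Rightarrow> complex" where
  "chi_set p q w A = (\<Sum>s\<in>A. chi p q w s)"

definition spectral :: "nat \<Rightarrow> nat \<Rightarrow> elt set \<Rightarrow> bool" where
  "spectral p q A \<longleftrightarrow> (\<exists>L. L \<subseteq> grp p q \<and> card L = card A \<and>
     (\<forall>l\<in>L. \<forall>m\<in>L. l \<noteq> m \<longrightarrow> chi_set p q (gsub p q l m) A = 0))"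

end

theory Submission
  imports Defs
begin

text \<open>The spectrum is the annihilator \<open>B\<^sup>\<perp>\<close> of \<open>B\<close>, the set of \<open>w\<close> whose character is trivial
  on \<open>B\<close>. Counting the pairs \<open>(w, b)\<close> with \<open>\<chi>\<^sub>w(b) = 1\<close> via orthogonality of characters gives
  \<open>|B\<^sup>\<perp>| |B| = |G| = |A| |B|\<close>. Being a subgroup, \<open>B\<^sup>\<perp>\<close> contains all differences of its
  elements, and for \<open>0 \<noteq> w \<in> B\<^sup>\<perp>\<close> the tiling factorises the vanishing character sum
  \<open>0 = \<chi>\<^sub>w(G) = \<chi>\<^sub>w(A) \<chi>\<^sub>w(B) = |B| \<chi>\<^sub>w(A)\<close>.\<close>

definition zmod_char :: "nat \<Rightarrow> nat \<Rightarrow> nat \<Rightarrow> complex" where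
  "zmod_char n u a = cis (2 * pi * real (u * a) / real n)"

lemma zmod_char_add: "zmod_char n u (a + c) = zmod_char n u a * zmod_char n u c"
  unfolding zmod_char_def by (simp add: cis_mult add_divide_distrib distrib_left)

lemma zmod_char_commute: "zmod_char n u a = zmod_char n a u"
  unfolding zmod_char_def by (simp add: mult.commute)

lemma zmod_char_0 [simp]: "zmod_char n u 0 = 1"
  unfolding zmod_char_def by simp

lemma zmod_char_mod:
  assumes "n > 0"
  shows "zmod_char n u (a mod n) = zmod_char n u a"
proof -
  have "2 * pi * real (u * (n * (a div n))) / real n = 2 * pi * real (u * (a div n))"
    using assms by (simp add: field_simps)
  then have "zmod_char n u (n * (a div n)) = 1"
    unfolding zmod_char_def by (simp del: of_nat_mult)
  then show ?thesis
    using zmod_char_add[of n u "a mod n" "n * (a div n)"] by simp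
qed

lemma zmod_char_one_neq_1:
  assumes "0 < u" "u < n"
  shows "zmod_char n u 1 \<noteq> 1"
proof
  assume "zmod_char n u 1 = 1"
  then have "cos (2 * pi * (real u / real n)) = 1"
    unfolding zmod_char_def by (metis cis.sel(1) one_complex.sel(1) mult.right_neutral times_divide_eq_right)
  then obtain k :: int where "2 * pi * (real u / real n) = 2 * pi * k"
    by (auto simp: cos_one_2pi_int)
  then have "real u / real n = k"
    by (rule mult_left_cancel[THEN iffD1, rotated]) (simp add: pi_neq_zero)
  moreover have "0 < real u / real n" "real u / real n < 1" using assms by auto
  ultimately have "0 < k" "k < 1" by simp_all
  then show False by simp
qed

lemma chi_eq_zmod_char:
  "chi p q (u1, u2, v1, v2) (a1, a2, b1, b2) =
     zmod_char p u1 a1 * zmod_char p u2 a2 * zmod_char q v1 b1 * zmod_char q v2 b2"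
  unfolding chi_def zmod_char_def by (simp add: cis_mult add_divide_distrib distrib_left add.assoc)

lemma chi_commute: "chi p q w s = chi p q s w"
  by (cases w; cases s) (simp add: chi_eq_zmod_char zmod_char_commute[of p] zmod_char_commute[of q])

lemma chi_zero_right [simp]: "chi p q w (0, 0, 0, 0) = 1"
  by (cases w) (simp add: chi_eq_zmod_char)

lemma chi_zero_left [simp]: "chi p q (0, 0, 0, 0) s = 1"
  by (simp add: chi_commute[of p q _ s])

lemma chi_gadd:
  assumes "0 < p" "0 < q"
  shows "chi p q w (gadd p q x y) = chi p q w x * chi p q w y"
  using assms
  by (cases w; cases x; cases y) (simp add: gadd_def chi_eq_zmod_char zmod_char_mod zmod_char_add mult_ac)

lemma chi_gadd_left:
  assumes "0 < p" "0 < q"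
  shows "chi p q (gadd p q x y) s = chi p q x s * chi p q y s"
  using chi_gadd[OF assms, of s x y] by (simp add: chi_commute[of p q _ s])

lemma finite_grp: "finite (grp p q)"
proof (rule finite_subset)
  show "grp p q \<subseteq> {..<p} \<times> {..<p} \<times> {..<q} \<times> {..<q}" by (auto simp: grp_def)
qed auto

lemma card_subgroup_neq_0: "is_subgroup p q H \<Longrightarrow> card H \<noteq> 0"
  unfolding is_subgroup_def using finite_subset[OF _ finite_grp] card_0_eq by blast

lemma gadd_in_grp: "0 < p \<Longrightarrow> 0 < q \<Longrightarrow> gadd p q x y \<in> grp p q"
  by (cases x; cases y) (simp add: gadd_def grp_def)

lemma gneg_in_grp: "0 < p \<Longrightarrow> 0 < q \<Longrightarrow> gneg p q x \<in> grp p q"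
  by (cases x) (simp add: gneg_def grp_def)

lemma is_subgroup_grp: "0 < p \<Longrightarrow> 0 < q \<Longrightarrow> is_subgroup p q (grp p q)"
  by (simp add: is_subgroup_def gadd_in_grp gneg_in_grp) (simp add: grp_def)

lemma gadd_commute: "gadd p q x y = gadd p q y x"
  by (cases x; cases y) (simp add: gadd_def add.commute)

lemma gadd_gneg_left: "m \<in> grp p q \<Longrightarrow> gadd p q (gneg p q m) m = (0, 0, 0, 0)"
proof -
  have neg: "((n - a) mod n + a) mod n = 0" if "a < n" for a n :: nat
    using that by (cases "a = 0") auto
  show "m \<in> grp p q \<Longrightarrow> ?thesis"
    by (cases m) (simp add: gadd_def gneg_def grp_def neg)
qed

lemma mod_add_left_cancel_less:
  fixes t x y n :: nat
  assumes "(t + x) mod n = (t + y) mod n" "x < n" "y < n"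
  shows "x = y"
proof -
  have "n dvd nat \<bar>int x - int y\<bar>"
    using assms(1) by (simp add: mod_eq_iff_dvd_symdiff_nat)
  moreover have "nat \<bar>int x - int y\<bar> < n" using assms(2,3) by simp
  ultimately have "nat \<bar>int x - int y\<bar> = 0" using nat_dvd_not_less by blast
  then show ?thesis by simp
qed

lemma gadd_left_cancel:
  assumes "x \<in> grp p q" "y \<in> grp p q" "gadd p q t x = gadd p q t y"
  shows "x = y"
  using assms
  by (cases t; cases x; cases y) (auto simp: gadd_def grp_def dest: mod_add_left_cancel_less)

lemma inj_on_gadd: "H \<subseteq> grp p q \<Longrightarrow> inj_on (gadd p q t) H"
  by (rule inj_onI) (use gadd_left_cancel in blast)

lemma gsub_eq_zero_imp_eq:
  assumes "0 < p" "0 < q" "l \<in> grp p q" "m \<in> grp p q" "gsub p q l m = (0, 0, 0, 0)"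
  shows "l = m"
proof (rule gadd_left_cancel)
  show "gadd p q (gneg p q m) l = gadd p q (gneg p q m) m"
    using assms(5) gadd_gneg_left[OF assms(4)] by (simp add: gsub_def gadd_commute)
qed (use assms in auto)

lemma chi_gneg_left:
  assumes "0 < p" "0 < q" "m \<in> grp p q"
  shows "chi p q (gneg p q m) s * chi p q m s = 1"
  using chi_gadd_left[OF assms(1,2), of "gneg p q m" m s] gadd_gneg_left[OF assms(3)] by simp

lemma gadd_image_subgroup:
  assumes "is_subgroup p q H" "h \<in> H"
  shows "gadd p q h ` H = H"
proof (rule card_subset_eq)
  have HG: "H \<subseteq> grp p q" using assms(1) by (simp add: is_subgroup_def)
  then show "finite H" using finite_subset finite_grp by blast
  show "gadd p q h ` H \<subseteq> H" using assms by (auto simp: is_subgroup_def)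
  show "card (gadd p q h ` H) = card H" using HG by (simp add: card_image inj_on_gadd)
qed

lemma chi_set_subgroup:
  assumes "0 < p" "0 < q" "is_subgroup p q H"
  shows "chi_set p q w H = (if \<forall>h\<in>H. chi p q w h = 1 then of_nat (card H) else 0)"
proof (cases "\<forall>h\<in>H. chi p q w h = 1")
  case False
  then obtain h where h: "h \<in> H" "chi p q w h \<noteq> 1" by blast
  have inj: "inj_on (gadd p q h) H"
    using assms(3) by (simp add: is_subgroup_def inj_on_gadd)
  have "chi_set p q w H = (\<Sum>s\<in>gadd p q h ` H. chi p q w s)"
    unfolding chi_set_def gadd_image_subgroup[OF assms(3) h(1)] ..
  also have "\<dots> = chi p q w h * chi_set p q w H"
    by (simp add: sum.reindex[OF inj] chi_gadd[OF assms(1,2)] sum_distrib_left chi_set_def)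
  finally have "chi_set p q w H = 0" using h(2) by (metis mult_cancel_right2)
  then show ?thesis by (simp only: if_not_P[OF False])
qed (simp add: chi_set_def)

lemma exists_chi_neq_1:
  assumes "w \<in> grp p q" "w \<noteq> (0, 0, 0, 0)"
  shows "\<exists>t\<in>grp p q. chi p q w t \<noteq> 1"
proof -
  obtain u1 u2 v1 v2 where w: "w = (u1, u2, v1, v2)" by (cases w)
  have bounds: "u1 < p" "u2 < p" "v1 < q" "v2 < q" using assms(1) by (auto simp: w grp_def)
  consider "0 < u1" | "0 < u2" | "0 < v1" | "0 < v2" using assms(2) w by auto
  then show ?thesis
  proof cases
    case 1 then show ?thesis using bounds zmod_char_one_neq_1[of u1 p]
      by (intro bexI[of _ "(1, 0, 0, 0)"]) (auto simp: w chi_eq_zmod_char grp_def)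
  next
    case 2 then show ?thesis using bounds zmod_char_one_neq_1[of u2 p]
      by (intro bexI[of _ "(0, 1, 0, 0)"]) (auto simp: w chi_eq_zmod_char grp_def)
  next
    case 3 then show ?thesis using bounds zmod_char_one_neq_1[of v1 q]
      by (intro bexI[of _ "(0, 0, 1, 0)"]) (auto simp: w chi_eq_zmod_char grp_def)
  next
    case 4 then show ?thesis using bounds zmod_char_one_neq_1[of v2 q]
      by (intro bexI[of _ "(0, 0, 0, 1)"]) (auto simp: w chi_eq_zmod_char grp_def)
  qed
qed

lemma chi_set_grp:
  assumes "0 < p" "0 < q" "w \<in> grp p q"
  shows "chi_set p q w (grp p q) = (if w = (0, 0, 0, 0) then of_nat (card (grp p q)) else 0)"
  using chi_set_subgroup[OF assms(1,2) is_subgroup_grp[OF assms(1,2)], of w]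
    exists_chi_neq_1[OF assms(3)] by (auto simp del: split_paired_All split_paired_Ex)

definition annihilator :: "nat \<Rightarrow> nat \<Rightarrow> elt set \<Rightarrow> elt set" where
  "annihilator p q B = {w \<in> grp p q. \<forall>b\<in>B. chi p q w b = 1}"

lemma card_annihilator:
  assumes "0 < p" "0 < q" "is_subgroup p q B"
  shows "card (annihilator p q B) * card B = card (grp p q)"
proof -
  let ?G = "grp p q"
  have BG: "B \<subseteq> ?G" and B0: "(0, 0, 0, 0) \<in> B" using assms(3) by (auto simp: is_subgroup_def)
  have "(\<Sum>w\<in>?G. chi_set p q w B) = (\<Sum>w\<in>?G. if \<forall>b\<in>B. chi p q w b = 1 then of_nat (card B) else 0)"
    using chi_set_subgroup[OF assms] by simp
  also have "\<dots> = (\<Sum>w\<in>annihilator p q B. of_nat (card B))"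
    by (simp only: annihilator_def sum.inter_filter[OF finite_grp])
  also have "\<dots> = of_nat (card (annihilator p q B) * card B)" by simp
  finally have "of_nat (card (annihilator p q B) * card B) = (\<Sum>w\<in>?G. chi_set p q w B)" ..
  also have "\<dots> = (\<Sum>b\<in>B. chi_set p q b ?G)"
    unfolding chi_set_def by (subst sum.swap) (simp add: chi_commute[of p q _ b for b])
  also have "\<dots> = (\<Sum>b\<in>B. if b = (0, 0, 0, 0) then of_nat (card ?G) else 0)"
    by (intro sum.cong refl chi_set_grp[OF assms(1,2)]) (use BG in blast)
  also have "\<dots> = of_nat (card ?G)"
    using B0 finite_subset[OF BG finite_grp] by simp
  finally show ?thesis by (simp only: of_nat_eq_iff)
qed

lemma gsub_in_annihilator:
  assumes "0 < p" "0 < q" "l \<in> annihilator p q B" "m \<in> annihilator p q B"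
  shows "gsub p q l m \<in> annihilator p q B"
  unfolding annihilator_def
proof (intro CollectI conjI ballI)
  show "gsub p q l m \<in> grp p q" unfolding gsub_def using assms(1,2) by (rule gadd_in_grp)
  fix b assume "b \<in> B"
  then have "chi p q l b = 1" "chi p q m b = 1" using assms(3,4) by (auto simp: annihilator_def)
  moreover have "chi p q (gneg p q m) b * chi p q m b = 1"
    using assms by (intro chi_gneg_left) (auto simp: annihilator_def)
  ultimately show "chi p q (gsub p q l m) b = 1"
    by (simp add: gsub_def chi_gadd_left[OF assms(1,2)])
qed

lemma sumset_eq_image: "sumset p q A B = (\<lambda>(a, b). gadd p q a b) ` (A \<times> B)"
  unfolding sumset_def by force

lemma chi_set_sumset:
  assumes "0 < p" "0 < q" "finite A" "finite B"
    and "inj_on (\<lambda>(a, b). gadd p q a b) (A \<times> B)"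
  shows "chi_set p q w (sumset p q A B) = chi_set p q w A * chi_set p q w B"
proof -
  have "chi_set p q w (sumset p q A B) = (\<Sum>(a, b)\<in>A \<times> B. chi p q w (gadd p q a b))"
    unfolding chi_set_def by (rule sum.reindex_cong[OF assms(5) sumset_eq_image]) auto
  also have "\<dots> = chi_set p q w A * chi_set p q w B"
    by (simp add: sum.cartesian_product[symmetric] chi_set_def chi_gadd[OF assms(1,2)] sum_product)
  finally show ?thesis .
qed

lemma chi_set_eq_0_on_annihilator:
  assumes "0 < p" "0 < q" "A \<subseteq> grp p q" "is_subgroup p q B"
    and "sumset p q A B = grp p q" "card A * card B = card (grp p q)"
    and "w \<in> annihilator p q B" "w \<noteq> (0, 0, 0, 0)"
  shows "chi_set p q w A = 0"
proof -
  have BG: "B \<subseteq> grp p q" using assms(4) by (simp add: is_subgroup_def)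
  have fin: "finite A" "finite B" using assms(3) BG finite_subset finite_grp by blast+
  have "card B \<noteq> 0" using assms(4) by (rule card_subgroup_neq_0)
  have "inj_on (\<lambda>(a, b). gadd p q a b) (A \<times> B)"
  proof (rule eq_card_imp_inj_on)
    show "card ((\<lambda>(a, b). gadd p q a b) ` (A \<times> B)) = card (A \<times> B)"
      using assms(5,6) by (simp add: sumset_eq_image[symmetric] card_cartesian_product)
  qed (use fin in simp)
  then have "chi_set p q w (grp p q) = chi_set p q w A * chi_set p q w B"
    using chi_set_sumset[OF assms(1,2) fin] assms(5) by simp
  moreover have "chi_set p q w B = of_nat (card B)"
    using chi_set_subgroup[OF assms(1,2,4)] assms(7) by (simp add: annihilator_def)
  moreover have "chi_set p q w (grp p q) = 0"
    using chi_set_grp[OF assms(1,2)] assms(7,8) by (simp add: annihilator_def)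
  ultimately show ?thesis using \<open>card B \<noteq> 0\<close> by simp
qed

theorem corollary5p2:
  fixes p q :: nat and A B :: "elt set"
  assumes "prime p" and "prime q" and "p \<noteq> q"
    and "A \<subseteq> grp p q"
    and "is_subgroup p q B"
    and "sumset p q A B = grp p q"
    and "card A * card B = card (grp p q)"
  shows "spectral p q A"
  unfolding spectral_def
proof (intro exI[of _ "annihilator p q B"] conjI ballI impI)
  have pq: "0 < p" "0 < q" using assms(1,2) prime_gt_0_nat by blast+
  show "annihilator p q B \<subseteq> grp p q" by (auto simp: annihilator_def)
  have "card B \<noteq> 0" using assms(5) by (rule card_subgroup_neq_0)
  then show "card (annihilator p q B) = card A"
    using card_annihilator[OF pq assms(5)] assms(7) by (metis mult_right_cancel)
  fix l m assume lm: "l \<in> annihilator p q B" "m \<in> annihilator p q B" "l \<noteq> m"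
  then have "gsub p q l m \<noteq> (0, 0, 0, 0)"
    using gsub_eq_zero_imp_eq[OF pq, of l m] by (auto simp: annihilator_def)
  then show "chi_set p q (gsub p q l m) A = 0"
    using chi_set_eq_0_on_annihilator[OF pq assms(4-7) gsub_in_annihilator[OF pq lm(1,2)]] by simp
qed

end
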